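(* There is a universal constant $C>0$ such that for all $q>2$, integers $n,p\ge1$ and $\sigma,B>0$, \[ \mathcal{E}_q(\sigma,B)\le C\min\{B,\,U^*(q,\sigma,B,p,n)\}, \] where \[ U^*(q,\sigma,B,p,n)=\begin{cases}\sigma\sqrt{\dfrac{\ln(2p)}n}, & \text{if } (B^2/\sigma^2)^{q/(q-2)}(\ln(2p)/n)\le e,\\[2ex] B\Big(\dfrac{\ln(2p)}n\Big)^{1-1/q}\Big[\ln\Big(\dfrac{B^2}{\sigma^2}\Big(\dfrac{\ln(2p)}n\Big)^{1-2/q}\Big)\Big]^{1/q-1}, & \text{if } (B^2/\sigma^2)^{q/(q-2)}(\ln(2p)/n)>e.\end{cases} \]
   Context: For independent mean-zero random vectors $\boldsymbol{X}_1,\dots,\boldsymbol{X}_n$ in $\mathbb{R}^p$ with joint law $P^n$, set $\mathcal{V}(P^n)=\max_{1\le j\le p}\frac1n\sum_{i=1}^n\mathbb{E}[X_i(j)^2]$ and $\mathcal{D}_q(P^n)=(\frac1n\sum_{i=1}^n\mathbb{E}[\max_{1\le j\le p}|X_i(j)|^q])^{1/q}$. $\mathcal{E}_q(\sigma,B)$ is the supremum of $\mathbb{E}[\max_{1\le j\le p}|\frac1n\sum_{i=1}^nX_i(j)|]$ over all such laws with $\mathcal{V}(P^n)\le\sigma^2$ and $\mathcal{D}_q(P^n)\le B$. The constant $C$ does not depend on $n,p,q,\sigma,B$. *)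

theory Defs
  imports "HOL-Probability.Probability"
begin

text \<open>Independent random vectors
  X_1..X_n are represented by their marginal laws mu 0, ..., mu (n-1); their joint
  law P^n is the product measure PiM {..<n} mu.\<close>

definition vec_space :: "nat \<Rightarrow> (nat \<Rightarrow> real) measure" where
  "vec_space p = PiM {..<p} (\<lambda>_. borel)"

text \<open>Admissible families of laws: probability laws on R^p, mean zero,
  with V(P^n) \<le> sigma^2 and D_q(P^n) \<le> B (the latter written as
  (1/n) sum_i E[max_j |X_i(j)|^q] \<le> B^q).\<close>

definition admissible_laws ::
  "real \<Rightarrow> real \<Rightarrow> real \<Rightarrow> nat \<Rightarrow> nat \<Rightarrow> (nat \<Rightarrow> (nat \<Rightarrow> real) measure) set" where
  "admissible_laws q \<sigma> B p n =
    {\<mu>. (\<forall>i<n. prob_space (\<mu> i) \<and> sets (\<mu> i) = sets (vec_space p)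
            \<and> (\<forall>j<p. integrable (\<mu> i) (\<lambda>x. x j) \<and> (\<integral>x. x j \<partial>\<mu> i) = 0))
       \<and> (\<forall>j<p. (\<Sum>i<n. \<integral>\<^sup>+x. ennreal ((x j)\<^sup>2) \<partial>\<mu> i) / ennreal (real n)
                  \<le> ennreal (\<sigma>\<^sup>2))
       \<and> (\<Sum>i<n. \<integral>\<^sup>+x. ennreal (Max ((\<lambda>j. \<bar>x j\<bar>) ` {..<p}) powr q) \<partial>\<mu> i)
              / ennreal (real n) \<le> ennreal (B powr q)}"

definition E_q :: "real \<Rightarrow> real \<Rightarrow> real \<Rightarrow> nat \<Rightarrow> nat \<Rightarrow> ennreal" where
  "E_q q \<sigma> B p n =
    (SUP \<mu>\<in>admissible_laws q \<sigma> B p n.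
       \<integral>\<^sup>+x. ennreal (Max ((\<lambda>j. \<bar>(\<Sum>i<n. x i j) / real n\<bar>) ` {..<p}))
         \<partial>(PiM {..<n} \<mu>))"

definition U_star :: "real \<Rightarrow> real \<Rightarrow> real \<Rightarrow> nat \<Rightarrow> nat \<Rightarrow> real" where
  "U_star q \<sigma> B p n =
    (let L = ln (2 * real p) / real n; r = B\<^sup>2 / \<sigma>\<^sup>2 in
     if r powr (q / (q - 2)) * L \<le> exp 1 then \<sigma> * sqrt L
     else B * L powr (1 - 1 / q) * (ln (r * L powr (1 - 2 / q))) powr (1 / q - 1))"

end

theory Submission
  imports Defs
begin

text \<open>
  Truncate every vector \<open>X\<^sub>i\<close> in the max norm at a level \<open>\<tau>\<close>. Because \<open>X\<^sub>i(j)\<close> has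
  mean zero and differs from its truncation \<open>Y\<close> by at most the tail
  \<open>T\<^sub>i = \<parallel>X\<^sub>i\<parallel> 1{\<parallel>X\<^sub>i\<parallel> > \<tau>}\<close>, a second-order Taylor bound gives
  \<open>E exp(s Y) \<le> exp(\<theta> E T\<^sub>i + \<theta>\<^sup>2 e\<^bsup>\<theta>\<tau>\<^esup> E X\<^sub>i(j)\<^sup>2 / 2)\<close> for \<open>|s| \<le> \<theta>\<close>, and
  \<open>T\<^sub>i \<le> \<tau>\<^bsup>1-q\<^esup> \<parallel>X\<^sub>i\<parallel>\<^sup>q\<close>. Independence multiplies these bounds over \<open>i\<close>, and the
  log-sum-exp inequality over the \<open>2p\<close> signed coordinates yields
  \<open>E max\<^sub>j |mean\<^sub>j| \<le> ln(2p)/(n\<theta>) + 2 \<tau>\<^bsup>1-q\<^esup> B\<^sup>q + \<theta> e\<^bsup>\<theta>\<tau>\<^esup> \<sigma>\<^sup>2 / 2\<close>.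
  In each of the two regimes of \<open>U*\<close> a suitable choice of \<open>\<tau>\<close> and \<open>\<theta>\<close> makes the right-hand
  side at most \<open>8 U*\<close>, while the cruder bound \<open>\<tau> + \<tau>\<^bsup>1-q\<^esup> B\<^sup>q\<close> at \<open>\<tau> = B\<close> gives \<open>2B\<close>.
\<close>

section \<open>Truncation in the max norm\<close>

definition max_norm :: "nat \<Rightarrow> (nat \<Rightarrow> real) \<Rightarrow> real" where
  "max_norm p y = Max ((\<lambda>j. \<bar>y j\<bar>) ` {..<p})"

definition truncation :: "nat \<Rightarrow> real \<Rightarrow> (nat \<Rightarrow> real) \<Rightarrow> nat \<Rightarrow> real" where
  "truncation p \<tau> y j = (if max_norm p y \<le> \<tau> then y j else 0)"

definition truncation_tail :: "nat \<Rightarrow> real \<Rightarrow> (nat \<Rightarrow> real) \<Rightarrow> real" where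
  "truncation_tail p \<tau> y = (if max_norm p y \<le> \<tau> then 0 else max_norm p y)"

lemma abs_le_max_norm: "j < p \<Longrightarrow> \<bar>y j\<bar> \<le> max_norm p y"
  unfolding max_norm_def by (intro Max_ge) auto

lemma abs_truncation_le: "\<bar>truncation p \<tau> y j\<bar> \<le> \<bar>y j\<bar>"
  unfolding truncation_def by auto

lemma abs_truncation_le_level: "j < p \<Longrightarrow> 0 \<le> \<tau> \<Longrightarrow> \<bar>truncation p \<tau> y j\<bar> \<le> \<tau>"
  unfolding truncation_def using abs_le_max_norm[of j p y] by auto

lemma abs_sub_truncation_le_tail: "j < p \<Longrightarrow> \<bar>y j - truncation p \<tau> y j\<bar> \<le> truncation_tail p \<tau> y"
  unfolding truncation_def truncation_tail_def using abs_le_max_norm[of j p y] by auto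

lemma truncation_tail_nonneg: "0 \<le> \<tau> \<Longrightarrow> 0 \<le> truncation_tail p \<tau> y"
  unfolding truncation_tail_def by auto

lemma max_norm_le_level_plus_tail: "0 \<le> \<tau> \<Longrightarrow> max_norm p y \<le> \<tau> + truncation_tail p \<tau> y"
  unfolding truncation_tail_def by auto

lemma truncation_tail_le_powr:
  assumes "0 < \<tau>" "1 \<le> q"
  shows "truncation_tail p \<tau> y \<le> \<tau> powr (1 - q) * max_norm p y powr q"
proof (cases "max_norm p y \<le> \<tau>")
  case False
  then have "max_norm p y = max_norm p y powr (1 - q) * max_norm p y powr q"
    using assms by (simp flip: powr_add)
  also have "\<dots> \<le> \<tau> powr (1 - q) * max_norm p y powr q"
    using False assms by (intro mult_right_mono powr_mono2') auto
  finally show ?thesis using False by (simp add: truncation_tail_def)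
qed (simp add: truncation_tail_def)

lemma measurable_component_vec:
  assumes "sets N = sets (vec_space p)" "j < p"
  shows "(\<lambda>y. y j) \<in> borel_measurable N"
proof -
  have "(\<lambda>y. y j) \<in> borel_measurable (vec_space p)"
    unfolding vec_space_def using assms(2) by (intro measurable_component_singleton) auto
  then show ?thesis using measurable_cong_sets[OF assms(1) refl] by blast
qed

lemma borel_measurable_max_norm:
  assumes "sets N = sets (vec_space p)"
  shows "max_norm p \<in> borel_measurable N"
  unfolding max_norm_def
  by (rule borel_measurable_Max) (auto intro!: borel_measurable_abs measurable_component_vec[OF assms])

lemma borel_measurable_truncation:
  assumes "sets N = sets (vec_space p)" "j < p"
  shows "(\<lambda>y. truncation p \<tau> y j) \<in> borel_measurable N"
proof -
  note [measurable] = borel_measurable_max_norm[OF assms(1)] measurable_component_vec[OF assms]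
  show ?thesis unfolding truncation_def by measurable
qed

lemma borel_measurable_truncation_tail:
  assumes "sets N = sets (vec_space p)"
  shows "truncation_tail p \<tau> \<in> borel_measurable N"
proof -
  note [measurable] = borel_measurable_max_norm[OF assms]
  show ?thesis unfolding truncation_tail_def by measurable
qed

definition max_abs_mean :: "nat \<Rightarrow> nat \<Rightarrow> (nat \<Rightarrow> nat \<Rightarrow> real) \<Rightarrow> real" where
  "max_abs_mean p n x = Max ((\<lambda>j. \<bar>(\<Sum>i<n. x i j) / real n\<bar>) ` {..<p})"

lemma max_abs_mean_nonneg:
  assumes "p \<ge> 1"
  shows "0 \<le> max_abs_mean p n x"
proof -
  have "\<bar>(\<Sum>i<n. x i 0) / real n\<bar> \<le> max_abs_mean p n x"
    unfolding max_abs_mean_def using assms by (intro Max_ge) auto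
  then show ?thesis by (rule order_trans[OF abs_ge_zero])
qed

lemma max_abs_mean_le_level_plus_tail:
  assumes "p \<ge> 1" "n \<ge> 1" "0 \<le> \<tau>"
  shows "max_abs_mean p n x \<le> \<tau> + (\<Sum>i<n. truncation_tail p \<tau> (x i)) / real n"
proof -
  have "\<bar>(\<Sum>i<n. x i j) / real n\<bar> \<le> \<tau> + (\<Sum>i<n. truncation_tail p \<tau> (x i)) / real n"
    if "j < p" for j
  proof -
    have "\<bar>\<Sum>i<n. x i j\<bar> \<le> (\<Sum>i<n. \<tau> + truncation_tail p \<tau> (x i))"
      by (intro order_trans[OF sum_abs] sum_mono
          order_trans[OF abs_le_max_norm[OF that] max_norm_le_level_plus_tail[OF assms(3)]])
    then have "\<bar>\<Sum>i<n. x i j\<bar> / real n \<le> (real n * \<tau> + (\<Sum>i<n. truncation_tail p \<tau> (x i))) / real n"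
      by (intro divide_right_mono) (auto simp: sum.distrib)
    then show ?thesis using assms(2) by (simp add: abs_divide add_divide_distrib)
  qed
  then show ?thesis
    unfolding max_abs_mean_def using assms(1) by (intro Max.boundedI) (auto simp: lessThan_empty_iff)
qed

lemma max_abs_mean_le_truncation_plus_tail:
  assumes "p \<ge> 1"
  shows "max_abs_mean p n x
    \<le> (Max ((\<lambda>j. \<bar>\<Sum>i<n. truncation p \<tau> (x i) j\<bar>) ` {..<p})
        + (\<Sum>i<n. truncation_tail p \<tau> (x i))) / real n"
proof -
  have "\<bar>(\<Sum>i<n. x i j) / real n\<bar>
      \<le> (Max ((\<lambda>j. \<bar>\<Sum>i<n. truncation p \<tau> (x i) j\<bar>) ` {..<p})
          + (\<Sum>i<n. truncation_tail p \<tau> (x i))) / real n"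
    if j: "j < p" for j
  proof -
    have "(\<Sum>i<n. x i j) = (\<Sum>i<n. truncation p \<tau> (x i) j) + (\<Sum>i<n. x i j - truncation p \<tau> (x i) j)"
      by (simp add: sum_subtractf)
    moreover have "\<bar>\<Sum>i<n. x i j - truncation p \<tau> (x i) j\<bar> \<le> (\<Sum>i<n. truncation_tail p \<tau> (x i))"
      by (rule order_trans[OF sum_abs sum_mono[OF abs_sub_truncation_le_tail[OF j]]])
    moreover have "\<bar>\<Sum>i<n. truncation p \<tau> (x i) j\<bar> \<le> Max ((\<lambda>j. \<bar>\<Sum>i<n. truncation p \<tau> (x i) j\<bar>) ` {..<p})"
      using j by (intro Max_ge) auto
    ultimately have "\<bar>\<Sum>i<n. x i j\<bar>
        \<le> Max ((\<lambda>j. \<bar>\<Sum>i<n. truncation p \<tau> (x i) j\<bar>) ` {..<p}) + (\<Sum>i<n. truncation_tail p \<tau> (x i))"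
      by linarith
    then show ?thesis by (simp add: abs_divide divide_right_mono)
  qed
  then show ?thesis
    unfolding max_abs_mean_def using assms by (intro Max.boundedI) (auto simp: lessThan_empty_iff)
qed

section \<open>Exponential moments and a maximal inequality\<close>

lemma exp_le_quadratic_taylor: "exp (u::real) \<le> 1 + u + u\<^sup>2 * exp \<bar>u\<bar> / 2"
proof -
  obtain t where t: "\<bar>t\<bar> \<le> \<bar>u\<bar>" "exp u = (\<Sum>m<2. u ^ m / fact m) + exp t / fact 2 * u ^ 2"
    using Maclaurin_exp_le[of u 2] by blast
  then have "exp t / fact 2 * u ^ 2 \<le> u\<^sup>2 * exp \<bar>u\<bar> / 2"
    by (simp add: mult_right_mono mult.commute)
  moreover have "(\<Sum>m<2. u ^ m / fact m) = 1 + u"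
    by (simp add: eval_nat_numeral)
  ultimately show ?thesis using t(2) by linarith
qed

lemma exp_truncated_le_quadratic:
  fixes x y t s \<theta> \<tau> :: real
  assumes y: "\<bar>y\<bar> \<le> \<bar>x\<bar>" "\<bar>y\<bar> \<le> \<tau>" and x_sub_y: "\<bar>x - y\<bar> \<le> t" and s: "\<bar>s\<bar> \<le> \<theta>"
  shows "exp (s * y) \<le> 1 + s * x + \<theta> * t + \<theta>\<^sup>2 * exp (\<theta> * \<tau>) / 2 * x\<^sup>2"
proof -
  have bound: "\<bar>s * y\<bar> \<le> \<theta> * \<tau>"
    unfolding abs_mult using s y(2) by (intro mult_mono) auto
  have "\<bar>s * (x - y)\<bar> \<le> \<theta> * t"
    unfolding abs_mult using s x_sub_y by (intro mult_mono) auto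
  then have linear: "s * y \<le> s * x + \<theta> * t"
    by (auto simp: right_diff_distrib abs_le_iff)
  have "\<bar>s * y\<bar> \<le> \<theta> * \<bar>x\<bar>"
    unfolding abs_mult using s y(1) by (intro mult_mono) auto
  then have "\<bar>s * y\<bar>\<^sup>2 \<le> (\<theta> * \<bar>x\<bar>)\<^sup>2"
    by (intro power_mono) auto
  then have "(s * y)\<^sup>2 * exp \<bar>s * y\<bar> \<le> (\<theta>\<^sup>2 * x\<^sup>2) * exp (\<theta> * \<tau>)"
    using bound by (intro mult_mono) (auto simp: power_mult_distrib)
  then have "(s * y)\<^sup>2 * exp \<bar>s * y\<bar> / 2 \<le> \<theta>\<^sup>2 * x\<^sup>2 * exp (\<theta> * \<tau>) / 2"
    by (rule divide_right_mono) simp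
  moreover have "\<theta>\<^sup>2 * x\<^sup>2 * exp (\<theta> * \<tau>) / 2 = \<theta>\<^sup>2 * exp (\<theta> * \<tau>) / 2 * x\<^sup>2"
    by simp
  ultimately show ?thesis
    using exp_le_quadratic_taylor[of "s * y"] linear by linarith
qed

lemma (in prob_space) expectation_exp_truncated_le:
  fixes X Y T :: "'a \<Rightarrow> real"
  assumes X: "integrable M X" "expectation X = 0" "integrable M (\<lambda>x. (X x)\<^sup>2)"
    and T: "integrable M T" and Y: "Y \<in> borel_measurable M"
    and Y_le: "\<And>x. \<bar>Y x\<bar> \<le> \<bar>X x\<bar>" "\<And>x. \<bar>Y x\<bar> \<le> \<tau>"
    and X_sub_Y: "\<And>x. \<bar>X x - Y x\<bar> \<le> T x" and s: "\<bar>s\<bar> \<le> \<theta>"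
  shows "integrable M (\<lambda>x. exp (s * Y x))"
    and "expectation (\<lambda>x. exp (s * Y x))
      \<le> 1 + \<theta> * expectation T + \<theta>\<^sup>2 * exp (\<theta> * \<tau>) / 2 * expectation (\<lambda>x. (X x)\<^sup>2)"
proof -
  have bound: "\<bar>s * Y x\<bar> \<le> \<theta> * \<tau>" for x
    unfolding abs_mult using s Y_le(2) by (intro mult_mono) auto
  have "exp (s * Y x) \<le> exp (\<theta> * \<tau>)" for x
    using abs_le_D1[OF bound[of x]] by simp
  then show int: "integrable M (\<lambda>x. exp (s * Y x))"
    using Y by (intro integrable_const_bound[where B="exp (\<theta> * \<tau>)"]) auto
  define c where "c = \<theta>\<^sup>2 * exp (\<theta> * \<tau>) / 2"
  have "expectation (\<lambda>x. exp (s * Y x)) \<le> expectation (\<lambda>x. 1 + s * X x + \<theta> * T x + c * (X x)\<^sup>2)"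
    using X T int exp_truncated_le_quadratic[OF Y_le X_sub_Y s] unfolding c_def
    by (intro integral_mono Bochner_Integration.integrable_add integrable_mult_right integrable_const)
  also have "\<dots> = 1 + \<theta> * expectation T + c * expectation (\<lambda>x. (X x)\<^sup>2)"
    using X T
    by (simp add: Bochner_Integration.integral_add integrable_mult_right Bochner_Integration.integrable_add prob_space)
  finally show "expectation (\<lambda>x. exp (s * Y x))
      \<le> 1 + \<theta> * expectation T + \<theta>\<^sup>2 * exp (\<theta> * \<tau>) / 2 * expectation (\<lambda>x. (X x)\<^sup>2)"
    unfolding c_def .
qed

lemma
  fixes f :: "'i \<Rightarrow> 'a \<Rightarrow> real"
  assumes "finite I" "\<And>i. i \<in> I \<Longrightarrow> sigma_finite_measure (M i)"
    and "\<And>i. i \<in> I \<Longrightarrow> integrable (M i) (f i)"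
  shows integrable_PiM_prod: "integrable (PiM I M) (\<lambda>x. \<Prod>i\<in>I. f i (x i))"
    and integral_PiM_prod: "(\<integral>x. (\<Prod>i\<in>I. f i (x i)) \<partial>PiM I M) = (\<Prod>i\<in>I. \<integral>y. f i y \<partial>M i)"
proof -
  \<comment> \<open>\<open>product_sigma_finite\<close> asks for all factors, so those outside \<open>I\<close> are made trivial.\<close>
  define M' where "M' i = (if i \<in> I then M i else count_space {})" for i
  interpret product_sigma_finite M'
    unfolding product_sigma_finite_def M'_def
    using assms(2) by (auto intro: sigma_finite_measure_count_space_finite)
  have PiM_eq: "PiM I M = PiM I M'" by (rule PiM_cong) (auto simp: M'_def)
  show "integrable (PiM I M) (\<lambda>x. \<Prod>i\<in>I. f i (x i))"
    using product_integrable_prod[OF assms(1), of f] assms(3) by (simp add: PiM_eq M'_def)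
  show "(\<integral>x. (\<Prod>i\<in>I. f i (x i)) \<partial>PiM I M) = (\<Prod>i\<in>I. \<integral>y. f i y \<partial>M i)"
    using product_integral_prod[OF assms(1), of f] assms(3) by (simp add: PiM_eq M'_def)
qed

lemma
  fixes f :: "'a \<Rightarrow> real"
  assumes "\<And>i. i \<in> I \<Longrightarrow> prob_space (M i)" "i \<in> I" "f \<in> borel_measurable (M i)"
  shows integrable_PiM_component_iff: "integrable (PiM I M) (\<lambda>x. f (x i)) \<longleftrightarrow> integrable (M i) f"
    and integral_PiM_component: "(\<integral>x. f (x i) \<partial>PiM I M) = (\<integral>y. f y \<partial>M i)"
proof -
  have component: "(\<lambda>x. x i) \<in> measurable (PiM I M) (M i)"
    using assms(2) by (rule measurable_component_singleton)
  have distr: "distr (PiM I M) (M i) (\<lambda>x. x i) = M i"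
    using assms(1,2) by (rule distr_PiM_component)
  show "integrable (PiM I M) (\<lambda>x. f (x i)) \<longleftrightarrow> integrable (M i) f"
    using integrable_distr_eq[OF component assms(3)] by (simp add: distr)
  show "(\<integral>x. f (x i) \<partial>PiM I M) = (\<integral>y. f y \<partial>M i)"
    using integral_distr[OF component assms(3)] by (simp add: distr)
qed

lemma Max_abs_le_log_sum_exp:
  fixes z :: "'j \<Rightarrow> real"
  assumes J: "finite J" "J \<noteq> {}" and "0 < \<theta>" "0 < K"
  shows "Max ((\<lambda>j. \<bar>z j\<bar>) ` J) \<le> ((\<Sum>j\<in>J. exp (\<theta> * z j) + exp (- \<theta> * z j)) / K + ln K - 1) / \<theta>"
proof -
  have "\<theta> * \<bar>z j\<bar> \<le> (\<Sum>j\<in>J. exp (\<theta> * z j) + exp (- \<theta> * z j)) / K + ln K - 1" if j: "j \<in> J" for j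
  proof -
    have "exp (\<theta> * \<bar>z j\<bar>) \<le> exp (\<theta> * z j) + exp (- \<theta> * z j)"
      by (cases "z j \<ge> 0") (auto simp: add_increasing add_increasing2)
    also have "\<dots> \<le> (\<Sum>j\<in>J. exp (\<theta> * z j) + exp (- \<theta> * z j))"
      using J j by (intro member_le_sum) (auto intro: add_nonneg_nonneg)
    finally have "exp (\<theta> * \<bar>z j\<bar> - ln K) \<le> (\<Sum>j\<in>J. exp (\<theta> * z j) + exp (- \<theta> * z j)) / K"
      using \<open>0 < K\<close> by (simp add: exp_diff divide_right_mono)
    moreover have "1 + (\<theta> * \<bar>z j\<bar> - ln K) \<le> exp (\<theta> * \<bar>z j\<bar> - ln K)"
      by (rule exp_ge_add_one_self)
    ultimately show ?thesis by linarith
  qed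
  then show ?thesis
    using J \<open>0 < \<theta>\<close> by (subst Max_le_iff) (auto simp: pos_le_divide_eq mult.commute)
qed

lemma (in prob_space) expectation_Max_abs_le:
  fixes Z :: "'j \<Rightarrow> 'a \<Rightarrow> real"
  assumes J: "finite J" "J \<noteq> {}" and \<theta>: "0 < \<theta>"
    and Z: "\<And>j. j \<in> J \<Longrightarrow> Z j \<in> borel_measurable M"
    and mgf: "\<And>j s. j \<in> J \<Longrightarrow> s \<in> {-\<theta>, \<theta>} \<Longrightarrow>
      integrable M (\<lambda>x. exp (s * Z j x)) \<and> expectation (\<lambda>x. exp (s * Z j x)) \<le> exp A"
  shows "integrable M (\<lambda>x. Max ((\<lambda>j. \<bar>Z j x\<bar>) ` J))"
    and "expectation (\<lambda>x. Max ((\<lambda>j. \<bar>Z j x\<bar>) ` J)) \<le> (ln (2 * real (card J)) + A) / \<theta>"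
proof -
  define K where "K = 2 * card J * exp A"
  have K: "0 < K" using J by (simp add: K_def card_gt_0_iff)
  define S where "S x = (\<Sum>j\<in>J. exp (\<theta> * Z j x) + exp (- \<theta> * Z j x))" for x
  have pointwise: "Max ((\<lambda>j. \<bar>Z j x\<bar>) ` J) \<le> (S x / K + ln K - 1) / \<theta>" for x
    unfolding S_def using J \<theta> K by (rule Max_abs_le_log_sum_exp)
  have int_exp: "integrable M (\<lambda>x. exp (\<theta> * Z j x))" "integrable M (\<lambda>x. exp (- \<theta> * Z j x))"
    and E_exp: "expectation (\<lambda>x. exp (\<theta> * Z j x)) \<le> exp A" "expectation (\<lambda>x. exp (- \<theta> * Z j x)) \<le> exp A"
    if "j \<in> J" for j
    using mgf[OF that, of \<theta>] mgf[OF that, of "- \<theta>"] by auto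
  have int_S: "integrable M S"
    unfolding S_def using int_exp by auto
  have "expectation S = (\<Sum>j\<in>J. expectation (\<lambda>x. exp (\<theta> * Z j x)) + expectation (\<lambda>x. exp (- \<theta> * Z j x)))"
    unfolding S_def using int_exp by (simp add: integral_sum Bochner_Integration.integral_add)
  also have "\<dots> \<le> (\<Sum>j\<in>J. exp A + exp A)"
    using E_exp by (intro sum_mono add_mono) auto
  finally have ES: "expectation S \<le> K"
    by (simp add: K_def)
  have nonneg: "0 \<le> Max ((\<lambda>j. \<bar>Z j x\<bar>) ` J)" for x
  proof -
    obtain j where "j \<in> J" using J(2) by blast
    then show ?thesis using J(1) by (intro order_trans[OF abs_ge_zero Max_ge]) auto
  qed
  have int_bound: "integrable M (\<lambda>x. (S x / K + ln K - 1) / \<theta>)"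
    by (intro integrable_divide Bochner_Integration.integrable_diff Bochner_Integration.integrable_add int_S integrable_const)
  have "(\<lambda>x. Max ((\<lambda>j. \<bar>Z j x\<bar>) ` J)) \<in> borel_measurable M"
    using J(1) Z by (intro borel_measurable_Max borel_measurable_abs)
  moreover have "AE x in M. norm (Max ((\<lambda>j. \<bar>Z j x\<bar>) ` J)) \<le> norm ((S x / K + ln K - 1) / \<theta>)"
    using pointwise nonneg by (intro AE_I2) (metis abs_of_nonneg order_trans real_norm_def)
  ultimately show int: "integrable M (\<lambda>x. Max ((\<lambda>j. \<bar>Z j x\<bar>) ` J))"
    by (rule Bochner_Integration.integrable_bound[OF int_bound])
  have "expectation (\<lambda>x. Max ((\<lambda>j. \<bar>Z j x\<bar>) ` J)) \<le> expectation (\<lambda>x. (S x / K + ln K - 1) / \<theta>)"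
    using int int_bound pointwise by (intro integral_mono)
  also have "\<dots> = (expectation S / K + ln K - 1) / \<theta>"
    using int_S by (simp add: prob_space)
  also have "\<dots> \<le> ln K / \<theta>"
    using ES K \<theta> by (intro divide_right_mono) (auto simp: divide_le_eq)
  also have "\<dots> = (ln (2 * real (card J)) + A) / \<theta>"
    using J by (simp add: K_def ln_mult card_gt_0_iff)
  finally show "expectation (\<lambda>x. Max ((\<lambda>j. \<bar>Z j x\<bar>) ` J)) \<le> (ln (2 * real (card J)) + A) / \<theta>" .
qed

section \<open>Admissible families of laws\<close>

lemma ennreal_le_mult_of_divide_le:
  assumes "a / ennreal r \<le> ennreal c" "0 < r"
  shows "a \<le> ennreal (c * r)"
proof -
  have "a = a / ennreal r * ennreal r"
    using assms(2) by (simp add: ennreal_divide_times)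
  also have "\<dots> \<le> ennreal c * ennreal r"
    using assms(1) by (rule mult_right_mono) simp
  also have "\<dots> = ennreal (c * r)"
    using assms(2) by (intro ennreal_mult''[symmetric]) simp
  finally show ?thesis .
qed

lemma
  fixes f :: "'i \<Rightarrow> 'a \<Rightarrow> real"
  assumes I: "finite I" and bound: "(\<Sum>i\<in>I. \<integral>\<^sup>+x. ennreal (f i x) \<partial>M i) \<le> ennreal c"
    and f: "\<And>i. i \<in> I \<Longrightarrow> f i \<in> borel_measurable (M i)" "\<And>i x. i \<in> I \<Longrightarrow> 0 \<le> f i x"
    and c: "0 \<le> c"
  shows integrable_of_sum_nn_integral_le: "\<And>i. i \<in> I \<Longrightarrow> integrable (M i) (f i)"
    and sum_integral_le_of_sum_nn_integral_le: "(\<Sum>i\<in>I. \<integral>x. f i x \<partial>M i) \<le> c"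
proof -
  show int: "integrable (M i) (f i)" if i: "i \<in> I" for i
  proof (rule integrableI_nonneg)
    have "(\<integral>\<^sup>+x. ennreal (f i x) \<partial>M i) \<le> (\<Sum>i\<in>I. \<integral>\<^sup>+x. ennreal (f i x) \<partial>M i)"
      by (rule member_le_sum[OF i _ I]) simp
    also have "\<dots> < \<infinity>"
      using le_less_trans[OF bound ennreal_less_top] by simp
    finally show "(\<integral>\<^sup>+x. ennreal (f i x) \<partial>M i) < \<infinity>" .
    show "f i \<in> borel_measurable (M i)" using i by (rule f(1))
    show "AE x in M i. 0 \<le> f i x" using i f(2) by simp
  qed
  have "ennreal (\<Sum>i\<in>I. \<integral>x. f i x \<partial>M i) = (\<Sum>i\<in>I. ennreal (\<integral>x. f i x \<partial>M i))"
    using f(2) by (intro sum_ennreal[symmetric] integral_nonneg_AE AE_I2)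
  also have "\<dots> = (\<Sum>i\<in>I. \<integral>\<^sup>+x. ennreal (f i x) \<partial>M i)"
    using int f(2) by (intro sum.cong refl nn_integral_eq_integral[symmetric] AE_I2)
  also have "\<dots> \<le> ennreal c"
    by (rule bound)
  finally show "(\<Sum>i\<in>I. \<integral>x. f i x \<partial>M i) \<le> c"
    using c by (simp add: ennreal_le_iff)
qed

text \<open>
  The three terms are the log-sum-exp term (with \<open>L = ln(2p)/n\<close>), the truncated tails (counted
  once inside the exponential moments and once directly), and the second-order Taylor term.
\<close>

definition truncation_bound :: "real \<Rightarrow> real \<Rightarrow> real \<Rightarrow> real \<Rightarrow> real \<Rightarrow> real \<Rightarrow> real" where
  "truncation_bound q \<sigma> B L \<tau> \<theta> =
    L / \<theta> + 2 * (\<tau> powr (1 - q) * B powr q) + \<theta> * exp (\<theta> * \<tau>) * \<sigma>\<^sup>2 / 2"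

context
  fixes q \<sigma> B :: real and p n :: nat and \<mu> :: "nat \<Rightarrow> (nat \<Rightarrow> real) measure"
  assumes admissible: "\<mu> \<in> admissible_laws q \<sigma> B p n"
    and n: "n \<ge> 1" and p: "p \<ge> 1" and q: "q \<ge> 1"
begin

lemma prob_space_law: "i < n \<Longrightarrow> prob_space (\<mu> i)"
  and sets_law: "i < n \<Longrightarrow> sets (\<mu> i) = sets (vec_space p)"
  and integrable_component: "i < n \<Longrightarrow> j < p \<Longrightarrow> integrable (\<mu> i) (\<lambda>y. y j)"
  and mean_zero: "i < n \<Longrightarrow> j < p \<Longrightarrow> (\<integral>y. y j \<partial>\<mu> i) = 0"
  using admissible unfolding admissible_laws_def by auto

lemma
  assumes j: "j < p"
  shows integrable_component_sq: "i < n \<Longrightarrow> integrable (\<mu> i) (\<lambda>y. (y j)\<^sup>2)"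
    and sum_second_moments_le: "(\<Sum>i<n. \<integral>y. (y j)\<^sup>2 \<partial>\<mu> i) \<le> \<sigma>\<^sup>2 * real n"
proof -
  have "(\<Sum>i<n. \<integral>\<^sup>+y. ennreal ((y j)\<^sup>2) \<partial>\<mu> i) / ennreal (real n) \<le> ennreal (\<sigma>\<^sup>2)"
    using admissible j unfolding admissible_laws_def by blast
  from ennreal_le_mult_of_divide_le[OF this] n
  have bound: "(\<Sum>i<n. \<integral>\<^sup>+y. ennreal ((y j)\<^sup>2) \<partial>\<mu> i) \<le> ennreal (\<sigma>\<^sup>2 * real n)"
    by simp
  have meas: "(\<lambda>y. (y j)\<^sup>2) \<in> borel_measurable (\<mu> i)" if "i \<in> {..<n}" for i
    using measurable_component_vec[OF sets_law j] that by simp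
  show "i < n \<Longrightarrow> integrable (\<mu> i) (\<lambda>y. (y j)\<^sup>2)"
    using integrable_of_sum_nn_integral_le[OF _ bound meas] by simp
  show "(\<Sum>i<n. \<integral>y. (y j)\<^sup>2 \<partial>\<mu> i) \<le> \<sigma>\<^sup>2 * real n"
    using sum_integral_le_of_sum_nn_integral_le[OF _ bound meas] by simp
qed

lemma
  shows integrable_max_norm_powr: "i < n \<Longrightarrow> integrable (\<mu> i) (\<lambda>y. max_norm p y powr q)"
    and sum_max_norm_moments_le: "(\<Sum>i<n. \<integral>y. max_norm p y powr q \<partial>\<mu> i) \<le> B powr q * real n"
proof -
  have "(\<Sum>i<n. \<integral>\<^sup>+y. ennreal (max_norm p y powr q) \<partial>\<mu> i) / ennreal (real n) \<le> ennreal (B powr q)"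
    using admissible unfolding admissible_laws_def max_norm_def by blast
  from ennreal_le_mult_of_divide_le[OF this] n
  have bound: "(\<Sum>i<n. \<integral>\<^sup>+y. ennreal (max_norm p y powr q) \<partial>\<mu> i) \<le> ennreal (B powr q * real n)"
    by simp
  have meas: "(\<lambda>y. max_norm p y powr q) \<in> borel_measurable (\<mu> i)" if "i \<in> {..<n}" for i
    using borel_measurable_max_norm[OF sets_law] that by (intro powr_real_measurable) auto
  show "i < n \<Longrightarrow> integrable (\<mu> i) (\<lambda>y. max_norm p y powr q)"
    using integrable_of_sum_nn_integral_le[OF _ bound meas] by simp
  show "(\<Sum>i<n. \<integral>y. max_norm p y powr q \<partial>\<mu> i) \<le> B powr q * real n"
    using sum_integral_le_of_sum_nn_integral_le[OF _ bound meas] by simp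
qed

lemma
  assumes \<tau>: "0 < \<tau>"
  shows integrable_truncation_tail: "i < n \<Longrightarrow> integrable (\<mu> i) (truncation_tail p \<tau>)"
    and sum_truncation_tail_le:
      "(\<Sum>i<n. \<integral>y. truncation_tail p \<tau> y \<partial>\<mu> i) \<le> real n * (\<tau> powr (1 - q) * B powr q)"
proof -
  have le: "truncation_tail p \<tau> y \<le> \<tau> powr (1 - q) * max_norm p y powr q" for y
    using \<tau> q by (rule truncation_tail_le_powr)
  have nonneg: "0 \<le> truncation_tail p \<tau> y" for y
    using \<tau> by (intro truncation_tail_nonneg) simp
  show int: "integrable (\<mu> i) (truncation_tail p \<tau>)" if i: "i < n" for i
  proof (rule Bochner_Integration.integrable_bound)
    show "integrable (\<mu> i) (\<lambda>y. \<tau> powr (1 - q) * max_norm p y powr q)"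
      using integrable_max_norm_powr[OF i] by (rule integrable_mult_right)
    show "truncation_tail p \<tau> \<in> borel_measurable (\<mu> i)"
      using i by (intro borel_measurable_truncation_tail sets_law)
    show "AE y in \<mu> i. norm (truncation_tail p \<tau> y) \<le> norm (\<tau> powr (1 - q) * max_norm p y powr q)"
      using le nonneg by (intro AE_I2) (metis abs_of_nonneg order_trans real_norm_def)
  qed
  have "(\<integral>y. truncation_tail p \<tau> y \<partial>\<mu> i) \<le> \<tau> powr (1 - q) * (\<integral>y. max_norm p y powr q \<partial>\<mu> i)"
    if i: "i < n" for i
    unfolding integral_mult_right_zero[symmetric]
    using int[OF i] integrable_max_norm_powr[OF i] le by (intro integral_mono integrable_mult_right)
  then have "(\<Sum>i<n. \<integral>y. truncation_tail p \<tau> y \<partial>\<mu> i)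
      \<le> \<tau> powr (1 - q) * (\<Sum>i<n. \<integral>y. max_norm p y powr q \<partial>\<mu> i)"
    by (auto simp: sum_distrib_left intro!: sum_mono)
  also have "\<dots> \<le> \<tau> powr (1 - q) * (B powr q * real n)"
    by (intro mult_left_mono sum_max_norm_moments_le) simp
  finally show "(\<Sum>i<n. \<integral>y. truncation_tail p \<tau> y \<partial>\<mu> i) \<le> real n * (\<tau> powr (1 - q) * B powr q)"
    by (simp add: mult_ac)
qed

lemma prob_space_joint: "prob_space (PiM {..<n} \<mu>)"
  using prob_space_law by (intro prob_space_PiM) auto

lemma measurable_joint_component: "i < n \<Longrightarrow> (\<lambda>x. x i) \<in> measurable (PiM {..<n} \<mu>) (\<mu> i)"
  by (intro measurable_component_singleton) simp

lemma borel_measurable_joint_coordinate: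
  "i < n \<Longrightarrow> j < p \<Longrightarrow> (\<lambda>x. x i j) \<in> borel_measurable (PiM {..<n} \<mu>)"
  by (rule measurable_compose[OF measurable_joint_component measurable_component_vec[OF sets_law]])

lemma borel_measurable_joint_truncation:
  "i < n \<Longrightarrow> j < p \<Longrightarrow> (\<lambda>x. truncation p \<tau> (x i) j) \<in> borel_measurable (PiM {..<n} \<mu>)"
  by (rule measurable_compose[OF measurable_joint_component borel_measurable_truncation[OF sets_law]])

lemma
  assumes \<tau>: "0 < \<tau>"
  shows integrable_joint_tail_sum: "integrable (PiM {..<n} \<mu>) (\<lambda>x. \<Sum>i<n. truncation_tail p \<tau> (x i))"
    and expectation_joint_tail_sum_le:
      "(\<integral>x. (\<Sum>i<n. truncation_tail p \<tau> (x i)) \<partial>PiM {..<n} \<mu>) \<le> real n * (\<tau> powr (1 - q) * B powr q)"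
proof -
  have laws: "\<And>i. i \<in> {..<n} \<Longrightarrow> prob_space (\<mu> i)"
    using prob_space_law by simp
  have int: "integrable (PiM {..<n} \<mu>) (\<lambda>x. truncation_tail p \<tau> (x i))"
    and eq: "(\<integral>x. truncation_tail p \<tau> (x i) \<partial>PiM {..<n} \<mu>) = (\<integral>y. truncation_tail p \<tau> y \<partial>\<mu> i)"
    if i: "i \<in> {..<n}" for i
  proof -
    have meas: "truncation_tail p \<tau> \<in> borel_measurable (\<mu> i)"
      using i by (intro borel_measurable_truncation_tail sets_law) simp
    show "integrable (PiM {..<n} \<mu>) (\<lambda>x. truncation_tail p \<tau> (x i))"
      using integrable_PiM_component_iff[of "{..<n}" \<mu> i, OF laws i meas]
        integrable_truncation_tail[OF \<tau>] i by simp
    show "(\<integral>x. truncation_tail p \<tau> (x i) \<partial>PiM {..<n} \<mu>) = (\<integral>y. truncation_tail p \<tau> y \<partial>\<mu> i)"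
      using integral_PiM_component[of "{..<n}" \<mu> i, OF laws i meas] .
  qed
  show "integrable (PiM {..<n} \<mu>) (\<lambda>x. \<Sum>i<n. truncation_tail p \<tau> (x i))"
    using int by (rule Bochner_Integration.integrable_sum)
  have "(\<integral>x. (\<Sum>i<n. truncation_tail p \<tau> (x i)) \<partial>PiM {..<n} \<mu>) = (\<Sum>i<n. \<integral>y. truncation_tail p \<tau> y \<partial>\<mu> i)"
    using int eq by (simp add: integral_sum)
  then show "(\<integral>x. (\<Sum>i<n. truncation_tail p \<tau> (x i)) \<partial>PiM {..<n} \<mu>) \<le> real n * (\<tau> powr (1 - q) * B powr q)"
    using sum_truncation_tail_le[OF \<tau>] by simp
qed

lemma
  assumes i: "i < n" and \<tau>: "0 < \<tau>" and s: "\<bar>s\<bar> \<le> \<theta>" and j: "j < p"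
  shows integrable_exp_truncation: "integrable (\<mu> i) (\<lambda>y. exp (s * truncation p \<tau> y j))"
    and expectation_exp_truncation_le:
      "(\<integral>y. exp (s * truncation p \<tau> y j) \<partial>\<mu> i)
        \<le> exp (\<theta> * (\<integral>y. truncation_tail p \<tau> y \<partial>\<mu> i) + \<theta>\<^sup>2 * exp (\<theta> * \<tau>) / 2 * (\<integral>y. (y j)\<^sup>2 \<partial>\<mu> i))"
proof -
  interpret prob_space "\<mu> i" using i by (rule prob_space_law)
  note truncated = expectation_exp_truncated_le[where X="\<lambda>y. y j" and T="truncation_tail p \<tau>",
      OF integrable_component[OF i j] mean_zero[OF i j] integrable_component_sq[OF j i]
      integrable_truncation_tail[OF \<tau> i] borel_measurable_truncation[OF sets_law[OF i] j]
      abs_truncation_le abs_truncation_le_level[OF j less_imp_le[OF \<tau>]]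
      abs_sub_truncation_le_tail[OF j] s]
  show "integrable (\<mu> i) (\<lambda>y. exp (s * truncation p \<tau> y j))"
    by (rule truncated(1))
  show "expectation (\<lambda>y. exp (s * truncation p \<tau> y j))
      \<le> exp (\<theta> * expectation (truncation_tail p \<tau>) + \<theta>\<^sup>2 * exp (\<theta> * \<tau>) / 2 * expectation (\<lambda>y. (y j)\<^sup>2))"
    using truncated(2) exp_ge_add_one_self[of "\<theta> * expectation (truncation_tail p \<tau>)
      + \<theta>\<^sup>2 * exp (\<theta> * \<tau>) / 2 * expectation (\<lambda>y. (y j)\<^sup>2)"] by linarith
qed

lemma
  assumes \<tau>: "0 < \<tau>" and s: "\<bar>s\<bar> \<le> \<theta>" and j: "j < p"
  shows integrable_exp_truncated_sum:
      "integrable (PiM {..<n} \<mu>) (\<lambda>x. exp (s * (\<Sum>i<n. truncation p \<tau> (x i) j)))"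
    and expectation_exp_truncated_sum_le:
      "(\<integral>x. exp (s * (\<Sum>i<n. truncation p \<tau> (x i) j)) \<partial>PiM {..<n} \<mu>)
        \<le> exp (\<theta> * (real n * (\<tau> powr (1 - q) * B powr q)) + \<theta>\<^sup>2 * exp (\<theta> * \<tau>) / 2 * (\<sigma>\<^sup>2 * real n))"
proof -
  define c where "c = \<theta>\<^sup>2 * exp (\<theta> * \<tau>) / 2"
  have laws: "\<And>i. i \<in> {..<n} \<Longrightarrow> sigma_finite_measure (\<mu> i)"
    using prob_space_imp_sigma_finite[OF prob_space_law] by simp
  have factors: "\<And>i. i \<in> {..<n} \<Longrightarrow> integrable (\<mu> i) (\<lambda>y. exp (s * truncation p \<tau> y j))"
    using integrable_exp_truncation[OF _ \<tau> s j] by simp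
  have prod_eq: "exp (s * (\<Sum>i<n. truncation p \<tau> (x i) j)) = (\<Prod>i<n. exp (s * truncation p \<tau> (x i) j))"
    for x by (simp add: sum_distrib_left exp_sum)
  note PiM_prod = integrable_PiM_prod integral_PiM_prod
  show "integrable (PiM {..<n} \<mu>) (\<lambda>x. exp (s * (\<Sum>i<n. truncation p \<tau> (x i) j)))"
    unfolding prod_eq using PiM_prod(1)[of "{..<n}" \<mu> "\<lambda>i y. exp (s * truncation p \<tau> y j)", OF _ laws factors]
    by simp
  have "(\<integral>x. exp (s * (\<Sum>i<n. truncation p \<tau> (x i) j)) \<partial>PiM {..<n} \<mu>)
      = (\<Prod>i<n. \<integral>y. exp (s * truncation p \<tau> y j) \<partial>\<mu> i)"
    unfolding prod_eq using PiM_prod(2)[of "{..<n}" \<mu> "\<lambda>i y. exp (s * truncation p \<tau> y j)", OF _ laws factors]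
    by simp
  also have "\<dots> \<le> (\<Prod>i<n. exp (\<theta> * (\<integral>y. truncation_tail p \<tau> y \<partial>\<mu> i) + c * (\<integral>y. (y j)\<^sup>2 \<partial>\<mu> i)))"
    using expectation_exp_truncation_le[OF _ \<tau> s j] unfolding c_def
    by (intro prod_mono conjI integral_nonneg_AE AE_I2) auto
  also have "\<dots> = exp (\<Sum>i<n. \<theta> * (\<integral>y. truncation_tail p \<tau> y \<partial>\<mu> i) + c * (\<integral>y. (y j)\<^sup>2 \<partial>\<mu> i))"
    by (simp add: exp_sum)
  also have "\<dots> = exp (\<theta> * (\<Sum>i<n. \<integral>y. truncation_tail p \<tau> y \<partial>\<mu> i) + c * (\<Sum>i<n. \<integral>y. (y j)\<^sup>2 \<partial>\<mu> i))"
    by (simp add: sum.distrib sum_distrib_left)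
  also have "\<dots> \<le> exp (\<theta> * (real n * (\<tau> powr (1 - q) * B powr q)) + c * (\<sigma>\<^sup>2 * real n))"
    using s sum_truncation_tail_le[OF \<tau>] sum_second_moments_le[OF j]
    by (intro exp_mono add_mono mult_left_mono) (auto simp: c_def)
  finally show "(\<integral>x. exp (s * (\<Sum>i<n. truncation p \<tau> (x i) j)) \<partial>PiM {..<n} \<mu>)
        \<le> exp (\<theta> * (real n * (\<tau> powr (1 - q) * B powr q)) + \<theta>\<^sup>2 * exp (\<theta> * \<tau>) / 2 * (\<sigma>\<^sup>2 * real n))"
    unfolding c_def .
qed

lemma
  assumes \<tau>: "0 < \<tau>" and \<theta>: "0 < \<theta>"
  shows integrable_max_abs_truncated_sum:
      "integrable (PiM {..<n} \<mu>) (\<lambda>x. Max ((\<lambda>j. \<bar>\<Sum>i<n. truncation p \<tau> (x i) j\<bar>) ` {..<p}))"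
    and expectation_max_abs_truncated_sum_le:
      "(\<integral>x. Max ((\<lambda>j. \<bar>\<Sum>i<n. truncation p \<tau> (x i) j\<bar>) ` {..<p}) \<partial>PiM {..<n} \<mu>)
        \<le> (ln (2 * real p) + \<theta> * (real n * (\<tau> powr (1 - q) * B powr q))
            + \<theta>\<^sup>2 * exp (\<theta> * \<tau>) / 2 * (\<sigma>\<^sup>2 * real n)) / \<theta>"
proof -
  interpret prob_space "PiM {..<n} \<mu>" by (rule prob_space_joint)
  have meas: "(\<lambda>x. \<Sum>i<n. truncation p \<tau> (x i) j) \<in> borel_measurable (PiM {..<n} \<mu>)"
    if "j \<in> {..<p}" for j
    using that by (intro borel_measurable_sum borel_measurable_joint_truncation) auto
  have mgf: "integrable (PiM {..<n} \<mu>) (\<lambda>x. exp (s * (\<Sum>i<n. truncation p \<tau> (x i) j)))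
      \<and> expectation (\<lambda>x. exp (s * (\<Sum>i<n. truncation p \<tau> (x i) j)))
        \<le> exp (\<theta> * (real n * (\<tau> powr (1 - q) * B powr q)) + \<theta>\<^sup>2 * exp (\<theta> * \<tau>) / 2 * (\<sigma>\<^sup>2 * real n))"
    if "j \<in> {..<p}" "s \<in> {- \<theta>, \<theta>}" for j s
    using that \<theta> \<tau> by (intro conjI integrable_exp_truncated_sum expectation_exp_truncated_sum_le) auto
  have J: "finite {..<p}" "{..<p} \<noteq> {}"
    using p by (auto simp: lessThan_empty_iff)
  show "integrable (PiM {..<n} \<mu>) (\<lambda>x. Max ((\<lambda>j. \<bar>\<Sum>i<n. truncation p \<tau> (x i) j\<bar>) ` {..<p}))"
    by (rule expectation_Max_abs_le(1)[OF J \<theta> meas mgf])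
  show "expectation (\<lambda>x. Max ((\<lambda>j. \<bar>\<Sum>i<n. truncation p \<tau> (x i) j\<bar>) ` {..<p}))
        \<le> (ln (2 * real p) + \<theta> * (real n * (\<tau> powr (1 - q) * B powr q))
            + \<theta>\<^sup>2 * exp (\<theta> * \<tau>) / 2 * (\<sigma>\<^sup>2 * real n)) / \<theta>"
    using expectation_Max_abs_le(2)[OF J \<theta> meas mgf] by (simp add: add.assoc)
qed

lemma
  assumes \<tau>: "0 < \<tau>"
  shows integrable_max_abs_mean: "integrable (PiM {..<n} \<mu>) (max_abs_mean p n)"
    and expectation_max_abs_mean_le_level:
      "(\<integral>x. max_abs_mean p n x \<partial>PiM {..<n} \<mu>) \<le> \<tau> + \<tau> powr (1 - q) * B powr q"
proof -
  interpret prob_space "PiM {..<n} \<mu>" by (rule prob_space_joint)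
  define G where "G x = \<tau> + (\<Sum>i<n. truncation_tail p \<tau> (x i)) / real n" for x
  have int_G: "integrable (PiM {..<n} \<mu>) G"
    unfolding G_def using integrable_joint_tail_sum[OF \<tau>]
    by (intro Bochner_Integration.integrable_add integrable_const integrable_divide)
  have le: "max_abs_mean p n x \<le> G x" for x
    unfolding G_def using p n \<tau> by (intro max_abs_mean_le_level_plus_tail) auto
  have "max_abs_mean p n \<in> borel_measurable (PiM {..<n} \<mu>)"
    unfolding max_abs_mean_def
    by (intro borel_measurable_Max borel_measurable_abs borel_measurable_divide borel_measurable_sum
        borel_measurable_const borel_measurable_joint_coordinate) auto
  moreover have "AE x in PiM {..<n} \<mu>. norm (max_abs_mean p n x) \<le> norm (G x)"
    using le max_abs_mean_nonneg[OF p] by (intro AE_I2) (metis abs_of_nonneg order_trans real_norm_def)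
  ultimately show int: "integrable (PiM {..<n} \<mu>) (max_abs_mean p n)"
    by (rule Bochner_Integration.integrable_bound[OF int_G])
  have "expectation (max_abs_mean p n) \<le> expectation G"
    using int int_G le by (intro integral_mono)
  also have "\<dots> = expectation (\<lambda>x. \<tau>) + expectation (\<lambda>x. (\<Sum>i<n. truncation_tail p \<tau> (x i)) / real n)"
    unfolding G_def using integrable_joint_tail_sum[OF \<tau>]
    by (intro Bochner_Integration.integral_add integrable_const integrable_divide)
  also have "\<dots> = \<tau> + expectation (\<lambda>x. \<Sum>i<n. truncation_tail p \<tau> (x i)) / real n"
    by (simp add: prob_space)
  also have "\<dots> \<le> \<tau> + \<tau> powr (1 - q) * B powr q"
    using expectation_joint_tail_sum_le[OF \<tau>] n by (simp add: pos_divide_le_eq mult.commute)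
  finally show "expectation (max_abs_mean p n) \<le> \<tau> + \<tau> powr (1 - q) * B powr q" .
qed

lemma expectation_max_abs_mean_le_truncation_bound:
  assumes \<tau>: "0 < \<tau>" and \<theta>: "0 < \<theta>"
  shows "(\<integral>x. max_abs_mean p n x \<partial>PiM {..<n} \<mu>) \<le> truncation_bound q \<sigma> B (ln (2 * real p) / real n) \<tau> \<theta>"
proof -
  interpret prob_space "PiM {..<n} \<mu>" by (rule prob_space_joint)
  define M where "M x = Max ((\<lambda>j. \<bar>\<Sum>i<n. truncation p \<tau> (x i) j\<bar>) ` {..<p})" for x
  define T where "T x = (\<Sum>i<n. truncation_tail p \<tau> (x i))" for x
  define t where "t = \<tau> powr (1 - q) * B powr q"
  have int_M: "integrable (PiM {..<n} \<mu>) M" and int_T: "integrable (PiM {..<n} \<mu>) T"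
    unfolding M_def T_def using integrable_max_abs_truncated_sum[OF \<tau> \<theta>] integrable_joint_tail_sum[OF \<tau>] .
  have "expectation (max_abs_mean p n) \<le> expectation (\<lambda>x. (M x + T x) / real n)"
    using integrable_max_abs_mean[OF \<tau>] int_M int_T max_abs_mean_le_truncation_plus_tail[OF p]
    unfolding M_def T_def by (intro integral_mono integrable_divide Bochner_Integration.integrable_add)
  also have "\<dots> = (expectation M + expectation T) / real n"
    using int_M int_T by (simp add: Bochner_Integration.integral_add)
  also have "\<dots> \<le> ((ln (2 * real p) + \<theta> * (real n * t) + \<theta>\<^sup>2 * exp (\<theta> * \<tau>) / 2 * (\<sigma>\<^sup>2 * real n)) / \<theta>
      + real n * t) / real n"
    using expectation_max_abs_truncated_sum_le[OF \<tau> \<theta>] expectation_joint_tail_sum_le[OF \<tau>]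
    unfolding M_def T_def t_def by (intro divide_right_mono add_mono) auto
  also have "\<dots> = truncation_bound q \<sigma> B (ln (2 * real p) / real n) \<tau> \<theta>"
    using n \<theta> by (simp add: truncation_bound_def t_def field_simps power2_eq_square)
  finally show ?thesis .
qed

lemma nn_integral_max_abs_mean:
  "(\<integral>\<^sup>+x. ennreal (max_abs_mean p n x) \<partial>PiM {..<n} \<mu>) = ennreal (\<integral>x. max_abs_mean p n x \<partial>PiM {..<n} \<mu>)"
  using integrable_max_abs_mean[of 1] max_abs_mean_nonneg[OF p]
  by (intro nn_integral_eq_integral AE_I2) auto

end

section \<open>Choice of the truncation level and the exponential parameter\<close>

lemma exp_linear_sub_half_exp_le_16:
  fixes c k :: real
  assumes "0 \<le> c" "c \<le> 2"
  shows "exp (c * k - exp k / 2) \<le> 16"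
proof (cases "k \<le> 0")
  case True
  then have "c * k - exp k / 2 \<le> 0"
    using assms(1) mult_nonneg_nonpos[of c k] exp_gt_zero[of k] by linarith
  then have "exp (c * k - exp k / 2) \<le> exp 0"
    by (rule exp_mono)
  then show ?thesis by (rule order_trans) simp
next
  case False
  define e where "e = exp k"
  have "c * k \<le> 2 * k" using False assms(2) by (intro mult_right_mono) auto
  then have "exp (c * k - exp k / 2) \<le> exp (2 * k - e / 2)" unfolding e_def by simp
  also have "\<dots> = e\<^sup>2 / (exp (e / 4) * exp (e / 4))"
    unfolding e_def by (simp add: exp_diff power2_eq_square flip: exp_add)
  also have "\<dots> \<le> 16"
  proof -
    have "e / 4 \<le> exp (e / 4)" using exp_ge_add_one_self[of "e / 4"] by linarith
    then have "(e / 4) * (e / 4) \<le> exp (e / 4) * exp (e / 4)"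
      unfolding e_def by (intro mult_mono) auto
    then show ?thesis by (simp add: divide_le_eq power2_eq_square)
  qed
  finally show ?thesis .
qed

lemma ratio_le_exp_1_iff:
  fixes q \<sigma> B L :: real
  assumes q: "q > 2" and pos: "\<sigma> > 0" "B > 0" "L > 0"
  shows "(B\<^sup>2 / \<sigma>\<^sup>2) powr (q / (q - 2)) * L \<le> exp 1 \<longleftrightarrow> ln (B\<^sup>2 / \<sigma>\<^sup>2 * L powr (1 - 2 / q)) \<le> 1 - 2 / q"
proof -
  define r where "r = ln (B\<^sup>2 / \<sigma>\<^sup>2)"
  have "(B\<^sup>2 / \<sigma>\<^sup>2) powr (q / (q - 2)) * L = exp (q / (q - 2) * r + ln L)"
    using pos by (simp add: r_def powr_def exp_add)
  moreover have "ln (B\<^sup>2 / \<sigma>\<^sup>2 * L powr (1 - 2 / q)) = r + (1 - 2 / q) * ln L"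
    using pos unfolding r_def by (subst ln_mult) (auto simp: ln_powr)
  moreover have "r + (1 - 2 / q) * ln L = (q - 2) / q * (q / (q - 2) * r + ln L)"
    using q by (simp add: field_simps)
  moreover have "1 - 2 / q = (q - 2) / q * 1"
    using q by (simp add: field_simps)
  moreover have "0 < (q - 2) / q"
    using q by simp
  ultimately show ?thesis
    by (simp only: exp_le_cancel_iff mult_le_cancel_left_pos)
qed

lemma ln_sq_div_mult_powr:
  fixes q \<sigma> B L :: real
  assumes "\<sigma> > 0" "B > 0" "L > 0"
  shows "ln (B\<^sup>2 / \<sigma>\<^sup>2 * L powr (1 - 2 / q)) = 2 * ln B - 2 * ln \<sigma> + (1 - 2 / q) * ln L"
  using assms by (simp add: ln_mult ln_div ln_powr ln_realpow)

lemma truncation_bound_small_ratio: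
  fixes q \<sigma> B L :: real
  assumes q: "q > 2" and pos: "\<sigma> > 0" "B > 0" "L > 0"
    and small: "(B\<^sup>2 / \<sigma>\<^sup>2) powr (q / (q - 2)) * L \<le> exp 1"
  shows "\<exists>\<tau>>0. \<exists>\<theta>>0. truncation_bound q \<sigma> B L \<tau> \<theta> \<le> 5 * (\<sigma> * sqrt L)"
proof -
  define s b l where "s = ln \<sigma>" and "b = ln B" and "l = ln L"
  have S: "\<sigma> = exp s" and Bb: "B = exp b" and Ll: "L = exp l"
    using pos by (simp_all add: s_def b_def l_def)
  have ratio: "2 * b - 2 * s + (1 - 2 / q) * l \<le> 1 - 2 / q"
    using small ratio_le_exp_1_iff[OF q pos] ln_sq_div_mult_powr[OF pos] by (simp add: s_def b_def l_def)
  \<comment> \<open>\<open>\<tau> = e\<^bsup>t\<^esup> = \<surd>e \<sigma> / \<surd>L\<close> and \<open>\<theta> = 1/\<tau>\<close>\<close>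
  define t where "t = 1/2 + s - l/2"
  define E where "E = exp (s + l / 2)"
  have "sqrt L = exp (l / 2)"
    unfolding Ll by (rule real_sqrt_unique) (simp_all add: power2_eq_square flip: exp_add)
  then have E: "\<sigma> * sqrt L = E"
    unfolding E_def S by (simp add: exp_add)
  have first: "L / exp (- t) = exp (1/2) * E"
    unfolding Ll t_def E_def by (simp add: exp_minus field_simps flip: exp_add)
  have second: "exp t powr (1 - q) * B powr q \<le> E"
  proof -
    have "(1 - q) * t + q * b - (s + l / 2) = (1 - q) / 2 + q / 2 * (2 * b - 2 * s + (1 - 2 / q) * l)"
      unfolding t_def using q by (simp add: field_simps)
    also have "\<dots> \<le> (1 - q) / 2 + q / 2 * (1 - 2 / q)"
      using ratio q by (intro add_left_mono mult_left_mono) auto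
    also have "\<dots> \<le> 0"
      using q by (simp add: field_simps)
    finally show ?thesis
      unfolding E_def Bb by (simp add: powr_def flip: exp_add)
  qed
  have third: "exp (- t) * exp (exp (- t) * exp t) * \<sigma>\<^sup>2 / 2 = exp (1/2) * E / 2"
  proof -
    have "exp (- t) * exp t = 1"
      by (simp flip: exp_add)
    then have "exp (- t) * exp (exp (- t) * exp t) * \<sigma>\<^sup>2 = exp (- t) * exp 1 * (exp s * exp s)"
      unfolding S by (simp add: power2_eq_square)
    also have "\<dots> = exp (- t + 1 + 2 * s)"
      by (simp only: exp_add mult_2)
    also have "- t + 1 + 2 * s = 1/2 + (s + l / 2)"
      unfolding t_def by simp
    finally show ?thesis
      unfolding E_def by (simp add: exp_add)
  qed
  have "exp (1/2) * E \<le> 2 * E"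
    using exp_half_le2 by (rule mult_right_mono) (simp add: E_def)
  then have "truncation_bound q \<sigma> B L (exp t) (exp (- t)) \<le> 5 * (\<sigma> * sqrt L)"
    unfolding truncation_bound_def first third E using second by linarith
  then show ?thesis
    using exp_gt_zero by blast
qed

lemma truncation_bound_large_ratio:
  fixes q \<sigma> B L :: real
  assumes q: "q > 2" and pos: "\<sigma> > 0" "B > 0" "L > 0"
    and large: "\<not> (B\<^sup>2 / \<sigma>\<^sup>2) powr (q / (q - 2)) * L \<le> exp 1"
  shows "\<exists>\<tau>>0. \<exists>\<theta>>0. truncation_bound q \<sigma> B L \<tau> \<theta>
    \<le> 8 * (B * L powr (1 - 1 / q) * ln (B\<^sup>2 / \<sigma>\<^sup>2 * L powr (1 - 2 / q)) powr (1 / q - 1))"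
proof -
  define s b l where "s = ln \<sigma>" and "b = ln B" and "l = ln L"
  have S: "\<sigma> = exp s" and Bb: "B = exp b" and Ll: "L = exp l"
    using pos by (simp_all add: s_def b_def l_def)
  have "1 - 2 / q < ln (B\<^sup>2 / \<sigma>\<^sup>2 * L powr (1 - 2 / q))"
    using large ratio_le_exp_1_iff[OF q pos] by simp
  moreover have "0 < 1 - 2 / q"
    using q by simp
  ultimately obtain k where k: "ln (B\<^sup>2 / \<sigma>\<^sup>2 * L powr (1 - 2 / q)) = exp k"
    by (metis exp_ln order.strict_trans)
  then have k_eq: "2 * b - 2 * s + (1 - 2 / q) * l = exp k"
    using ln_sq_div_mult_powr[OF pos] by (simp add: s_def b_def l_def)
  define u where "u = b + (1 - 1 / q) * l + (1 / q - 1) * k"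
  have U: "B * L powr (1 - 1 / q) * ln (B\<^sup>2 / \<sigma>\<^sup>2 * L powr (1 - 2 / q)) powr (1 / q - 1) = exp u"
    unfolding k u_def by (simp add: Bb Ll powr_def flip: exp_add)
  \<comment> \<open>These make each of the three terms of \<open>truncation_bound\<close> a multiple of \<open>exp u = U*\<close>.\<close>
  define \<tau> \<theta> where "\<tau> = exp (b + (k - l) / q)" and "\<theta> = exp (k - b - (k - l) / q) / 2"
  have first: "L / \<theta> = 2 * exp u"
  proof -
    have "l - (k - b - (k - l) / q) = u"
      unfolding u_def using q by (simp add: field_simps)
    then have "exp l / exp (k - b - (k - l) / q) = exp u"
      by (simp only: exp_diff[symmetric])
    then show ?thesis
      unfolding \<theta>_def Ll by (metis divide_divide_eq_right times_divide_eq_left mult.commute)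
  qed
  have second: "\<tau> powr (1 - q) * B powr q = exp u"
  proof -
    have "(1 - q) * (b + (k - l) / q) + q * b = u"
      unfolding u_def using q by (simp add: field_simps)
    then show ?thesis
      unfolding \<tau>_def Bb by (simp add: powr_def flip: exp_add)
  qed
  have third: "\<theta> * exp (\<theta> * \<tau>) * \<sigma>\<^sup>2 / 2 \<le> 4 * exp u"
  proof -
    have "\<theta> * \<tau> = exp k / 2"
      unfolding \<theta>_def \<tau>_def by (simp flip: exp_add)
    moreover have "exp (k - b - (k - l) / q + exp k / 2 + 2 * s)
        = exp (k - b - (k - l) / q) * exp (exp k / 2) * (exp s)\<^sup>2"
      by (simp only: exp_add mult_2 power2_eq_square)
    ultimately have "\<theta> * exp (\<theta> * \<tau>) * \<sigma>\<^sup>2 / 2 = exp (k - b - (k - l) / q + exp k / 2 + 2 * s) / 4"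
      unfolding \<theta>_def S by simp
    also have "k - b - (k - l) / q + exp k / 2 + 2 * s = u + ((2 - 2 / q) * k - exp k / 2)"
      unfolding u_def k_eq[symmetric] using q by (simp add: field_simps)
    also have "exp (u + ((2 - 2 / q) * k - exp k / 2)) / 4 = exp u * exp ((2 - 2 / q) * k - exp k / 2) / 4"
      by (simp add: exp_add)
    also have "\<dots> \<le> exp u * 16 / 4"
      using q by (intro divide_right_mono mult_left_mono exp_linear_sub_half_exp_le_16)
        (auto simp: divide_le_eq)
    finally show ?thesis by simp
  qed
  have "truncation_bound q \<sigma> B L \<tau> \<theta> \<le> 8 * exp u"
    unfolding truncation_bound_def first second using third by linarith
  moreover have "0 < \<tau>" "0 < \<theta>"
    unfolding \<tau>_def \<theta>_def by simp_all
  ultimately show ?thesis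
    unfolding U by blast
qed

lemma truncation_bound_le_U_star:
  assumes q: "q > 2" and pos: "\<sigma> > 0" "B > 0" and "p \<ge> 1" "n \<ge> 1"
  shows "\<exists>\<tau>>0. \<exists>\<theta>>0. truncation_bound q \<sigma> B (ln (2 * real p) / real n) \<tau> \<theta> \<le> 8 * U_star q \<sigma> B p n"
proof -
  define L where "L = ln (2 * real p) / real n"
  have L: "L > 0"
    using assms(4,5) by (simp add: L_def)
  show ?thesis
  proof (cases "(B\<^sup>2 / \<sigma>\<^sup>2) powr (q / (q - 2)) * L \<le> exp 1")
    case True
    then have "U_star q \<sigma> B p n = \<sigma> * sqrt L"
      by (simp add: U_star_def L_def Let_def)
    moreover have "0 \<le> \<sigma> * sqrt L"
      using pos L by simp
    ultimately show ?thesis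
      using truncation_bound_small_ratio[OF q pos L True] unfolding L_def by fastforce
  next
    case False
    then have "U_star q \<sigma> B p n
        = B * L powr (1 - 1 / q) * ln (B\<^sup>2 / \<sigma>\<^sup>2 * L powr (1 - 2 / q)) powr (1 / q - 1)"
      by (simp add: U_star_def L_def Let_def)
    then show ?thesis
      using truncation_bound_large_ratio[OF q pos L False] unfolding L_def by simp
  qed
qed

theorem theorem4p5:
  shows "\<exists>C>0. \<forall>q \<sigma> B p n. q > 2 \<longrightarrow> p \<ge> 1 \<longrightarrow> n \<ge> 1 \<longrightarrow> \<sigma> > 0 \<longrightarrow> B > 0 \<longrightarrow>
           E_q q \<sigma> B p n \<le> ennreal (C * min B (U_star q \<sigma> B p n))"
proof (intro exI[of _ 8] conjI allI impI)
  fix q \<sigma> B :: real and p n :: nat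
  assume q: "q > 2" and p: "p \<ge> 1" and n: "n \<ge> 1" and \<sigma>: "\<sigma> > 0" and B: "B > 0"
  then have q1: "q \<ge> 1" by simp
  obtain \<tau> \<theta> where \<tau>\<theta>: "\<tau> > 0" "\<theta> > 0"
    and tradeoff: "truncation_bound q \<sigma> B (ln (2 * real p) / real n) \<tau> \<theta> \<le> 8 * U_star q \<sigma> B p n"
    using truncation_bound_le_U_star[OF q \<sigma> B p n] by blast
  show "E_q q \<sigma> B p n \<le> ennreal (8 * min B (U_star q \<sigma> B p n))"
    unfolding E_q_def max_abs_mean_def[symmetric]
  proof (rule SUP_least)
    fix \<mu> assume \<mu>: "\<mu> \<in> admissible_laws q \<sigma> B p n"
    have "(\<integral>x. max_abs_mean p n x \<partial>PiM {..<n} \<mu>) \<le> B + B powr (1 - q) * B powr q"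
      by (rule expectation_max_abs_mean_le_level[OF \<mu> n p q1 B])
    also have "B powr (1 - q) * B powr q = B"
      using B by (simp flip: powr_add)
    finally have "(\<integral>x. max_abs_mean p n x \<partial>PiM {..<n} \<mu>) \<le> 8 * B"
      using B by simp
    moreover have "(\<integral>x. max_abs_mean p n x \<partial>PiM {..<n} \<mu>) \<le> 8 * U_star q \<sigma> B p n"
      using expectation_max_abs_mean_le_truncation_bound[OF \<mu> n p q1 \<tau>\<theta>] tradeoff by simp
    ultimately show "(\<integral>\<^sup>+x. ennreal (max_abs_mean p n x) \<partial>PiM {..<n} \<mu>) \<le> ennreal (8 * min B (U_star q \<sigma> B p n))"
      unfolding nn_integral_max_abs_mean[OF \<mu> n p q1] by (intro ennreal_leI) (simp add: min_def)
  qed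
qed simp

end
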